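(* For any integer $n\ge3$, with $P_n$ and $C_n$ the path and cycle of order $n$, $$\gamma_{(2,2,1)}(C_n)=\gamma_{(2,2,1)}(P_n)=\begin{cases} n-\lfloor n/7\rfloor+1 & \text{if } n\equiv1,2\pmod 7,\\ n-\lfloor n/7\rfloor & \text{otherwise.}\end{cases}$$
   Context: $N(v)$ is the open neighbourhood. $\gamma_{(2,2,1)}(G)$ is the minimum of $\sum_v f(v)$ over functions $f:V(G)\to\{0,1,2\}$ such that $\sum_{u\in N(v)}f(u)\ge 2$ whenever $f(v)\in\{0,1\}$ and $\sum_{u\in N(v)}f(u)\ge1$ whenever $f(v)=2$. *)

theory Defs
  imports Main
begin

text \<open>A graph is given by a finite vertex set V and the open neighbourhood map N.\<close>

definition is_221_fun :: "'a set \<Rightarrow> ('a \<Rightarrow> 'a set) \<Rightarrow> ('a \<Rightarrow> nat) \<Rightarrow> bool" where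
  "is_221_fun V N f \<longleftrightarrow>
     (\<forall>v\<in>V. f v \<le> 2) \<and>
     (\<forall>v\<in>V. f v \<le> 1 \<longrightarrow> (\<Sum>u\<in>N v. f u) \<ge> 2) \<and>
     (\<forall>v\<in>V. f v = 2 \<longrightarrow> (\<Sum>u\<in>N v. f u) \<ge> 1)"

definition gamma221 :: "'a set \<Rightarrow> ('a \<Rightarrow> 'a set) \<Rightarrow> nat" where
  "gamma221 V N = (LEAST w. \<exists>f. is_221_fun V N f \<and> w = (\<Sum>v\<in>V. f v))"

definition path_nbhd :: "nat \<Rightarrow> nat \<Rightarrow> nat set" where
  "path_nbhd n v = {u \<in> {0..<n}. u + 1 = v \<or> v + 1 = u}"

definition cycle_nbhd :: "nat \<Rightarrow> nat \<Rightarrow> nat set" where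
  "cycle_nbhd n v = {u \<in> {0..<n}. u \<noteq> v \<and> ((u + 1) mod n = v \<or> (v + 1) mod n = u)}"

end

(* Adding edges can only help a (2,2,1)-function, so every one on P_n is one on C_n and
   gamma(C_n) <= gamma(P_n). Concatenating copies of the block 0 2 1 0 1 2 0 with a labelling of a
   path on 3..9 vertices gives gamma(P_n) <= n - floor(n/7) (+1 if n = 1, 2 mod 7).

   For the lower bound let f be a (2,2,1)-function on C_n of weight w. If f has no zero, w >= n.
   Otherwise read C_n as a word starting at a zero. A potential indexed by the second letter, the
   last two letters and the length mod 7 bounds 7 * weight - 6 * length of every prefix from below;
   that appending an admissible letter respects it is a finite check. Closing the word up into the
   cycle bounds 7 w - 6 n from below by n mod 7, plus 7 if n mod 7 is 1 or 2, which is the claim. *)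

theory Submission
  imports Defs
begin

definition meets_221 :: "nat \<Rightarrow> nat \<Rightarrow> bool" where
  "meets_221 x s \<longleftrightarrow> (if x \<le> 1 then 2 \<le> s else 1 \<le> s)"

lemma meets_221_mono: "meets_221 x s \<Longrightarrow> s \<le> s' \<Longrightarrow> meets_221 x s'"
  unfolding meets_221_def by (auto split: if_splits)

lemma is_221_fun_iff:
  "is_221_fun V N f \<longleftrightarrow> (\<forall>v\<in>V. f v \<le> 2 \<and> meets_221 (f v) (\<Sum>u\<in>N v. f u))"
  unfolding is_221_fun_def meets_221_def by (fastforce simp: le_Suc_eq)

lemma is_221_fun_mono_nbhd:
  assumes "is_221_fun V N f" and "\<And>v. v \<in> V \<Longrightarrow> N v \<subseteq> N' v \<and> finite (N' v)"
  shows "is_221_fun V N' f"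
  using assms unfolding is_221_fun_iff by (meson meets_221_mono sum_mono2 zero_le)

lemma gamma221_eqI:
  assumes "is_221_fun V N f" "(\<Sum>v\<in>V. f v) = w" "\<And>g. is_221_fun V N g \<Longrightarrow> w \<le> (\<Sum>v\<in>V. g v)"
  shows "gamma221 V N = w"
  unfolding gamma221_def by (rule Least_equality) (use assms in auto)

lemma path_nbhd_sum:
  assumes "v < n"
  shows "(\<Sum>u\<in>path_nbhd n v. f u) = (if v = 0 then 0 else f (v - 1)) + (if Suc v < n then f (Suc v) else 0)"
proof -
  have "path_nbhd n v = (if v = 0 then {} else {v - 1}) \<union> (if Suc v < n then {Suc v} else {})"
    using assms unfolding path_nbhd_def by auto
  then show ?thesis by (simp add: sum.union_disjoint add.commute)
qed

text \<open>\<^term>\<open>path_221 l xs\<close>: the labelling \<^term>\<open>xs\<close> of a path in which the first vertex has one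
  extra neighbour, of weight \<^term>\<open>l\<close>, is a (2,2,1)-function.\<close>

fun path_221 :: "nat \<Rightarrow> nat list \<Rightarrow> bool" where
  "path_221 l [] \<longleftrightarrow> True"
| "path_221 l [x] \<longleftrightarrow> x \<le> 2 \<and> meets_221 x l"
| "path_221 l (x # y # ys) \<longleftrightarrow> x \<le> 2 \<and> meets_221 x (l + y) \<and> path_221 x (y # ys)"

lemma path_221_mono: "path_221 l xs \<Longrightarrow> l \<le> l' \<Longrightarrow> path_221 l' xs"
  by (induction l xs rule: path_221.induct) (auto intro: meets_221_mono)

lemma path_221_append: "path_221 l xs \<Longrightarrow> path_221 0 ys \<Longrightarrow> path_221 l (xs @ ys)"
proof (induction l xs rule: path_221.induct)
  case (2 l x)
  then show ?case
    by (cases ys) (auto intro: meets_221_mono path_221_mono)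
qed (auto intro: path_221_mono)

lemma path_221_nth:
  assumes "path_221 l xs" "i < length xs"
  shows "xs ! i \<le> 2 \<and>
    meets_221 (xs ! i) ((if i = 0 then l else xs ! (i - 1)) + (if Suc i < length xs then xs ! Suc i else 0))"
  using assms
proof (induction l xs arbitrary: i rule: path_221.induct)
  case (3 l x y ys)
  show ?case
  proof (cases i)
    case 0
    then show ?thesis using "3.prems"(1) by simp
  next
    case (Suc j)
    then show ?thesis using "3.IH"[of j] "3.prems" by (cases j) auto
  qed
qed auto

lemma is_221_fun_path_221:
  assumes "path_221 0 xs"
  shows "is_221_fun {0..<length xs} (path_nbhd (length xs)) (\<lambda>v. xs ! v)"
  unfolding is_221_fun_iff using path_221_nth[OF assms] by (simp add: path_nbhd_sum)

lemma is_221_fun_cycle_of_path: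
  assumes "is_221_fun {0..<n} (path_nbhd n) f"
  shows "is_221_fun {0..<n} (cycle_nbhd n) f"
proof (rule is_221_fun_mono_nbhd[OF assms])
  fix v assume "v \<in> {0..<n}"
  then show "path_nbhd n v \<subseteq> cycle_nbhd n v \<and> finite (cycle_nbhd n v)"
    unfolding path_nbhd_def cycle_nbhd_def by auto
qed

definition gamma221_value :: "nat \<Rightarrow> nat" where
  "gamma221_value n = (if n mod 7 = 1 \<or> n mod 7 = 2 then n - n div 7 + 1 else n - n div 7)"

text \<open>As \<open>7 w - 6 n \<equiv> n (mod 7)\<close> for every weight
  \<open>w\<close>, the lower bound says that \<open>7 w - 6 n\<close> is nonnegative and never 1 or 2.\<close>

definition cycle_excess :: "nat \<Rightarrow> nat" where
  "cycle_excess r = (if r = 1 \<or> r = 2 then r + 7 else r)"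

lemma seven_mult_gamma221_value: "7 * gamma221_value n = 6 * n + cycle_excess (n mod 7)"
proof -
  define q r where "q = n div 7" and "r = n mod 7"
  have "n = 7 * q + r" "r < 7"
    unfolding q_def r_def by simp_all
  then show ?thesis
    unfolding gamma221_value_def cycle_excess_def q_def[symmetric] r_def[symmetric] by auto
qed

lemma gamma221_value_add_7: "gamma221_value (n + 7) = gamma221_value n + 6"
  unfolding gamma221_value_def by auto

lemma cycle_excess_le: "3 \<le> n \<Longrightarrow> cycle_excess (n mod 7) \<le> n"
  unfolding cycle_excess_def by presburger

lemma path_221_witness:
  "3 \<le> n \<Longrightarrow> \<exists>xs. length xs = n \<and> path_221 0 xs \<and> sum_list xs = gamma221_value n"
proof (induction n rule: less_induct)
  case (less n)
  show ?case
  proof (cases "n \<le> 9")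
    case True
    with less.prems consider "n = 3" | "n = 4" | "n = 5" | "n = 6" | "n = 7" | "n = 8" | "n = 9"
      by linarith
    then show ?thesis
    proof cases
      case 1 show ?thesis by (rule exI[of _ "[0,2,1]"]) (simp add: 1 meets_221_def gamma221_value_def)
    next
      case 2 show ?thesis by (rule exI[of _ "[0,2,2,0]"]) (simp add: 2 meets_221_def gamma221_value_def)
    next
      case 3 show ?thesis by (rule exI[of _ "[0,2,1,2,0]"]) (simp add: 3 meets_221_def gamma221_value_def)
    next
      case 4 show ?thesis by (rule exI[of _ "[0,2,1,0,1,2]"]) (simp add: 4 meets_221_def gamma221_value_def)
    next
      case 5 show ?thesis by (rule exI[of _ "[0,2,1,0,1,2,0]"]) (simp add: 5 meets_221_def gamma221_value_def)
    next
      case 6 show ?thesis by (rule exI[of _ "[0,2,1,0,1,2,2,0]"]) (simp add: 6 meets_221_def gamma221_value_def)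
    next
      case 7 show ?thesis by (rule exI[of _ "[0,2,1,0,1,2,0,1,2]"]) (simp add: 7 meets_221_def gamma221_value_def)
    qed
  next
    case False
    then have "n - 7 < n" "3 \<le> n - 7" by auto
    then obtain xs where xs: "length xs = n - 7" "path_221 0 xs" "sum_list xs = gamma221_value (n - 7)"
      using less.IH by blast
    let ?block = "[0, 2, 1, 0, 1, 2, 0]"
    have "path_221 0 (?block @ xs)"
      by (rule path_221_append[OF _ xs(2)]) (simp add: meets_221_def)
    moreover have "gamma221_value n = gamma221_value (n - 7) + 6"
      using gamma221_value_add_7[of "n - 7"] False by simp
    ultimately show ?thesis using xs False by (intro exI[of _ "?block @ xs"]) simp
  qed
qed

lemma sum_rotate_mod:
  fixes f :: "nat \<Rightarrow> 'a::cancel_comm_monoid_add"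
  shows "(\<Sum>i<n. f ((v + i) mod n)) = (\<Sum>i<n. f i)"
proof (induction v)
  case 0
  show ?case by (rule sum.cong) simp_all
next
  case (Suc v)
  let ?g = "\<lambda>i. f ((v + i) mod n)"
  have "?g 0 + (\<Sum>i<n. ?g (Suc i)) = (\<Sum>i<Suc n. ?g i)"
    by (rule sum.lessThan_Suc_shift[symmetric])
  also have "\<dots> = (\<Sum>i<n. ?g i) + ?g n"
    by (rule sum.lessThan_Suc)
  finally show ?case using Suc.IH by (simp add: add.commute)
qed

lemma cycle_nbhd_Suc_mod:
  assumes "3 \<le> n"
  shows "cycle_nbhd n (Suc j mod n) = {j mod n, (j + 2) mod n}"
proof -
  have pred: "Suc u mod n = Suc j mod n \<longleftrightarrow> u = j mod n" if "u < n" for u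
    using that assms by (auto simp: mod_Suc split: if_splits)
  have succ: "Suc (Suc j mod n) mod n = (j + 2) mod n"
    by (simp add: mod_Suc_eq)
  have "j mod n \<noteq> Suc j mod n" "(j + 2) mod n \<noteq> Suc j mod n"
    using assms by (auto simp: mod_Suc)
  then show ?thesis
    using assms unfolding cycle_nbhd_def by (auto simp: pred succ)
qed

lemma cycle_nbhd_sum_Suc_mod:
  assumes "3 \<le> n"
  shows "(\<Sum>u\<in>cycle_nbhd n (Suc j mod n). f u) = f (j mod n) + f ((j + 2) mod n)"
proof -
  have "j mod n \<noteq> (j + 2) mod n"
    using assms by (simp add: mod_Suc)
  then show ?thesis unfolding cycle_nbhd_Suc_mod[OF assms] by simp
qed

text \<open>\<^term>\<open>potential s a b r\<close> is the minimum of \<open>7 \<cdot> weight - 6 \<cdot> length\<close> over all words that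
  start with \<open>0 s\<close>, end with \<open>a b\<close>, have length \<open>\<equiv> r (mod 7)\<close> and at least 2, and satisfy the
  (2,2,1)-condition at every interior letter. The table was computed by dynamic programming over
  these words; below, only its local consistency is checked.\<close>

definition potential_table :: "int list list" where
  "potential_table =
    [[-7, -6, -12, -4, -3, -9, -8],
     [0, 1, -5, -4, -3, -2, -8],
     [0, 1, 2, -4, 4, 5, -1],
     [0, -6, -5, -4, -3, -9, -1],
     [0, 1, 2, 3, 4, -2, -1],
     [0, 8, 9, 3, 4, 5, 6],
     [0, -6, 2, 3, -3, -2, -1],
     [0, 1, 2, 3, -3, 5, 6],
     [7, 8, 9, 10, 4, 12, 13],
     [0, -6, -5, -4, -3, -9, -1],
     [0, 1, -5, 3, 4, -2, -1],
     [7, 8, 2, 3, 4, 5, -1],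
     [0, -6, 2, 3, -3, -2, -1],
     [7, 1, 2, 3, 4, 5, 6],
     [7, 8, 9, 3, 11, 12, 6],
     [0, 1, 2, 3, -3, 5, 6],
     [0, 8, 9, 3, 4, 5, 6],
     [7, 15, 16, 10, 11, 12, 13],
     [0, -6, 2, 3, -3, -2, -1],
     [7, 1, 2, 3, 4, -2, 6],
     [7, 8, 2, 10, 11, 5, 6],
     [0, 1, 2, 3, -3, 5, 6],
     [7, 8, 9, 10, 4, 5, 6],
     [14, 15, 9, 10, 11, 12, 6],
     [0, 8, 9, 3, 4, 5, 6],
     [7, 8, 9, 3, 11, 12, 6],
     [14, 15, 16, 10, 18, 19, 13]]"

definition potential :: "nat \<Rightarrow> nat \<Rightarrow> nat \<Rightarrow> nat \<Rightarrow> int" where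
  "potential s a b r = potential_table ! (9 * s + 3 * a + b) ! r"

text \<open>Bounded quantifiers over \<^term>\<open>set [0..<n]\<close> are evaluated quickly by \<open>code_simp\<close>.\<close>

lemma all_less_iff_all_upt: "(\<forall>i<n. P i) \<longleftrightarrow> (\<forall>i\<in>set [0..<n]. P i)"
  by auto

lemma potential_start: "\<forall>s<3. potential s 0 s 2 \<le> 7 * int s - 12"
  unfolding all_less_iff_all_upt by code_simp

lemma potential_step:
  "\<forall>s<3. \<forall>a<3. \<forall>b<3. \<forall>c<3. \<forall>r<7. meets_221 b (a + c) \<longrightarrow>
     potential s b c (Suc r mod 7) \<le> potential s a b r + 7 * int c - 6"
  unfolding all_less_iff_all_upt by code_simp

lemma potential_closing:
  "\<forall>s<3. \<forall>r<7. int (cycle_excess r) \<le> potential s 0 s ((r + 2) mod 7) - 7 * int s + 12"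
  unfolding all_less_iff_all_upt by code_simp

lemma potential_bound:
  fixes g :: "nat \<Rightarrow> nat"
  assumes bounded: "\<And>i. g i \<le> 2"
    and meets: "\<And>i. meets_221 (g (Suc i)) (g i + g (i + 2))"
    and start: "g 0 = 0"
  shows "6 * int (k + 2) + potential (g 1) (g k) (g (Suc k)) ((k + 2) mod 7)
           \<le> 7 * int (\<Sum>i<k + 2. g i)"
proof (induction k)
  case 0
  have "potential (g 1) 0 (g 1) 2 \<le> 7 * int (g 1) - 12"
    using potential_start bounded[of 1] by simp
  moreover have "(\<Sum>i<2. g i) = g 0 + g 1"
    by (simp add: numeral_2_eq_2)
  ultimately show ?case using start by (simp add: numeral_2_eq_2)
next
  case (Suc k)
  have "potential (g 1) (g (Suc k)) (g (k + 2)) (Suc ((k + 2) mod 7) mod 7)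
          \<le> potential (g 1) (g k) (g (Suc k)) ((k + 2) mod 7) + 7 * int (g (k + 2)) - 6"
    using potential_step bounded[of 1] bounded[of k] bounded[of "Suc k"] bounded[of "k + 2"]
      meets[of k] by simp
  then show ?case using Suc.IH by (simp add: mod_Suc_eq numeral_2_eq_2)
qed

lemma cycle_221_weight_lower:
  assumes n: "3 \<le> n" and f: "is_221_fun {0..<n} (cycle_nbhd n) f"
  shows "6 * n + cycle_excess (n mod 7) \<le> 7 * (\<Sum>i<n. f i)"
proof (cases "\<exists>v<n. f v = 0")
  case False
  then have "n \<le> (\<Sum>i<n. f i)"
    using sum_mono[of "{..<n}" "\<lambda>_. 1::nat" f] by fastforce
  then show ?thesis using cycle_excess_le[OF n] by linarith
next
  case True
  then obtain v where v: "v < n" "f v = 0" by blast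
  define g where "g i = f ((v + i) mod n)" for i
  have f_at: "f (m mod n) \<le> 2 \<and> meets_221 (f (m mod n)) (\<Sum>u\<in>cycle_nbhd n (m mod n). f u)" for m
    using f n unfolding is_221_fun_iff by simp
  have bounded: "g i \<le> 2" for i
    unfolding g_def using f_at by blast
  have meets: "meets_221 (g (Suc i)) (g i + g (i + 2))" for i
    using f_at[of "Suc (v + i)"] unfolding g_def cycle_nbhd_sum_Suc_mod[OF n]
    by (simp add: add.assoc)
  have g_wrap: "g 0 = 0" "g n = 0" "g (Suc n) = g 1"
    unfolding g_def using v mod_add_self2[of "Suc v" n] by simp_all
  have bound: "6 * int (n + 2) + potential (g 1) 0 (g 1) ((n + 2) mod 7) \<le> 7 * int (\<Sum>i<n + 2. g i)"
    using potential_bound[OF bounded meets g_wrap(1), of n] g_wrap by simp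
  have "(\<Sum>i<n + 2. g i) = (\<Sum>i<n. f i) + g 1"
    using g_wrap sum_rotate_mod[of f v n] unfolding g_def by (simp add: numeral_2_eq_2)
  then have weight: "int (\<Sum>i<n + 2. g i) = int (\<Sum>i<n. f i) + int (g 1)"
    by (simp only: of_nat_add)
  have "int (cycle_excess (n mod 7))
      \<le> potential (g 1) 0 (g 1) ((n mod 7 + 2) mod 7) - 7 * int (g 1) + 12"
    using potential_closing bounded[of 1] by simp
  then have closing: "int (cycle_excess (n mod 7))
      \<le> potential (g 1) 0 (g 1) ((n + 2) mod 7) - 7 * int (g 1) + 12"
    by (simp only: mod_add_left_eq)
  from bound weight closing have "int (6 * n + cycle_excess (n mod 7)) \<le> int (7 * (\<Sum>i<n. f i))"
    unfolding of_nat_add of_nat_mult of_nat_numeral by (smt (verit))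
  then show ?thesis by (simp only: of_nat_le_iff)
qed

theorem proposition30:
  fixes n :: nat
  assumes "n \<ge> 3"
  shows "gamma221 {0..<n} (cycle_nbhd n) = gamma221 {0..<n} (path_nbhd n) \<and>
         gamma221 {0..<n} (path_nbhd n) =
           (if n mod 7 = 1 \<or> n mod 7 = 2 then n - n div 7 + 1 else n - n div 7)"
proof -
  obtain xs where xs: "length xs = n" "path_221 0 xs" "sum_list xs = gamma221_value n"
    using path_221_witness[OF assms] by blast
  have path: "is_221_fun {0..<n} (path_nbhd n) (\<lambda>v. xs ! v)"
    using is_221_fun_path_221[OF xs(2)] xs(1) by simp
  have weight: "(\<Sum>v\<in>{0..<n}. xs ! v) = gamma221_value n"
    using xs(1,3) by (simp add: sum_list_sum_nth)
  have lower: "gamma221_value n \<le> (\<Sum>v\<in>{0..<n}. f v)" if "is_221_fun {0..<n} (cycle_nbhd n) f" for f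
    using cycle_221_weight_lower[OF assms that] seven_mult_gamma221_value[of n]
    by (simp add: atLeast0LessThan)
  have "gamma221 {0..<n} (cycle_nbhd n) = gamma221_value n"
    using is_221_fun_cycle_of_path[OF path] weight lower by (rule gamma221_eqI)
  moreover have "gamma221 {0..<n} (path_nbhd n) = gamma221_value n"
    using path weight lower[OF is_221_fun_cycle_of_path] by (rule gamma221_eqI)
  ultimately show ?thesis unfolding gamma221_value_def by simp
qed

end
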